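(* For any digraph $G$, $\mathrm{sstat}_{\mathtt{vsc}}(G)\ge 1+\mathrm{cr}(G)$.
   Context: All digraphs are finite, simple, without self-loops and have at least one vertex (induced subgraphs appearing as game data may be empty). For a finite set $V$, $V^*$ is the set of finite words over $V$, $\epsilon$ the empty word; $X \preceq Y$ means $X$ is a prefix of $Y$; for $X=a_1\cdots a_n$, $|X|=n$ and $\mathrm{let}(X)=\{a_1,\dots,a_n\}$. $A\Delta B$ is symmetric difference. For $X\subseteq V(G)$, $G\setminus X$ is the subgraph induced by $V(G)\setminus X$. Induced subgraphs are identified with their vertex sets. Cycle-rank $\mathrm{cr}(G)$: $0$ if $G$ is acyclic; $1+\min_{v\in V(G)}\mathrm{cr}(G\setminus\{v\})$ if $G$ is strongly connected (and not acyclic); otherwise the maximum of $\mathrm{cr}(H)$ over strongly connected components $H$ of $G$. A position is a pair $(X,R)$ with $X\in V(G)^*$ and $R$ a (possibly empty) induced subgraph of $G\setminus\mathrm{let}(X)$; it is a $\mathtt{vsc}$-position if $R$ is a strongly connected component of $G\setminus\mathrm{let}(X)$. A $\mathtt{vsc}$-position $(X',R')$ is a $\mathtt{vsc}$-successor of $(X,R)$ if ($X\preceq X'$ or $X'\preceq X$), $|\mathrm{let}(X)\Delta\mathrm{let}(X')|=1$, and every $v'\in R'$ lies in the same strongly connected component of $G\setminus(\mathrm{let}(X)\cap\mathrm{let}(X'))$ as some $v\in R$. If $(\epsilon,G)$ is not a $\mathtt{vsc}$-position it is nevertheless admitted as a special position whose $\mathtt{vsc}$-successors are exactly the $\mathtt{vsc}$-positions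 $(\epsilon,R)$. A $\mathtt{vsc}$-search from $(X_0,R_0)$ is a finite or infinite sequence of such positions with each $(X_{i+1},R_{i+1})$ a $\mathtt{vsc}$-successor of $(X_i,R_i)$; it is complete if it is infinite or $R_n=\emptyset$ for some $n$, and a complete search is winning for the searchers if $R_n=\emptyset$ for some $n$. A complete search from $(\epsilon,G)$ is searcher-stationary if $X_i\preceq X_{i+1}$ for all $i$ with $R_i\neq\emptyset$, and uses at most $k$ searchers if $|X_i|\le k$ for all $i$. A $\mathtt{vsc}$-strategy is a function $\sigma$ from $\mathtt{vsc}$-positions to $V(G)^*$ such that $\sigma(X,R)$ is the first component of some $\mathtt{vsc}$-successor of $(X,R)$; a search is consistent with $\sigma$ if $X_{i+1}=\sigma(X_i,R_i)$ for all $i$. $\sigma$ is winning if every complete consistent search from $(\epsilon,G)$ is winning for the searchers; it is searcher-stationary / uses at most $k$ searchers if every complete consistent search from $(\epsilon,G)$ has that property. $\mathrm{sstat}_{\mathtt{vsc}}(G)$ is the minimum $k$ such that there is a searcher-stationary winning $\mathtt{vsc}$-strategy using at most $k$ searchers. *)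

theory Defs
  imports Main "HOL-Library.Sublist" "HOL-Library.Extended_Nat"
begin

text \<open>A digraph is given by a finite nonempty vertex set V and an irreflexive
edge relation E on V. Induced subgraphs are identified with vertex sets H.\<close>

definition digraph :: "'a set \<Rightarrow> ('a \<times> 'a) set \<Rightarrow> bool" where
  "digraph V E \<longleftrightarrow> finite V \<and> V \<noteq> {} \<and> E \<subseteq> V \<times> V \<and> (\<forall>v. (v, v) \<notin> E)"

definition reach :: "('a \<times> 'a) set \<Rightarrow> 'a set \<Rightarrow> 'a \<Rightarrow> 'a \<Rightarrow> bool" where
  "reach E H u v \<longleftrightarrow> (u, v) \<in> (E \<inter> (H \<times> H))\<^sup>*"

definition same_scc :: "('a \<times> 'a) set \<Rightarrow> 'a set \<Rightarrow> 'a \<Rightarrow> 'a \<Rightarrow> bool" where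
  "same_scc E H u v \<longleftrightarrow> u \<in> H \<and> v \<in> H \<and> reach E H u v \<and> reach E H v u"

definition sccs :: "('a \<times> 'a) set \<Rightarrow> 'a set \<Rightarrow> 'a set set" where
  "sccs E H = {S. \<exists>u\<in>H. S = {v. same_scc E H u v}}"

definition strongly_connected :: "('a \<times> 'a) set \<Rightarrow> 'a set \<Rightarrow> bool" where
  "strongly_connected E H \<longleftrightarrow> H \<noteq> {} \<and> (\<forall>u\<in>H. \<forall>v\<in>H. reach E H u v)"

definition acyclic_sub :: "('a \<times> 'a) set \<Rightarrow> 'a set \<Rightarrow> bool" where
  "acyclic_sub E H \<longleftrightarrow> (\<forall>u\<in>H. (u, u) \<notin> (E \<inter> (H \<times> H))\<^sup>+)"

lemma scc_proper_subset:
  assumes "S \<in> sccs E H" "\<not> strongly_connected E H"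
  shows "S \<subset> H"
proof -
  from assms(1) obtain u where u: "u \<in> H" "S = {v. same_scc E H u v}"
    unfolding sccs_def by blast
  have sub: "S \<subseteq> H" using u unfolding same_scc_def by auto
  show ?thesis
  proof (rule ccontr)
    assume "\<not> S \<subset> H"
    then have "S = H" using sub by blast
    then have "\<forall>v\<in>H. reach E H u v \<and> reach E H v u" using u unfolding same_scc_def by auto
    then have "\<forall>x\<in>H. \<forall>y\<in>H. reach E H x y"
      unfolding reach_def by (meson rtrancl_trans)
    then show False using assms(2) u(1) unfolding strongly_connected_def by blast
  qed
qed

function cr :: "('a \<times> 'a) set \<Rightarrow> 'a set \<Rightarrow> nat" where
  "cr E H =
     (if infinite H \<or> acyclic_sub E H then 0
      else if strongly_connected E H then 1 + Min ((\<lambda>v. cr E (H - {v})) ` H)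
      else Max ((\<lambda>S. cr E S) ` sccs E H))"
  by pat_completeness auto
termination
proof (relation "measure (\<lambda>(E, H). card H)")
  show "wf (measure (\<lambda>(E, H). card H))" by simp
next
  fix E :: "('a \<times> 'a) set" and H v
  assume "\<not> (infinite H \<or> acyclic_sub E H)" "v \<in> H"
  then show "((E, H - {v}), E, H) \<in> measure (\<lambda>(E, H). card H)"
    using card_Diff1_less[of H v] by simp
next
  fix E :: "('a \<times> 'a) set" and H S
  assume a: "\<not> (infinite H \<or> acyclic_sub E H)" "\<not> strongly_connected E H" "S \<in> sccs E H"
  then have "S \<subset> H" by (rule_tac scc_proper_subset)
  then show "((E, S), E, H) \<in> measure (\<lambda>(E, H). card H)"
    using a(1) by (simp add: psubset_card_mono)
qed

declare cr.simps[simp del]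

text \<open>A vsc-position: X is a word over V, and R is a strongly connected component of
G minus let(X), or R is empty (the robber has been captured).\<close>

type_synonym 'a position = "'a list \<times> 'a set"

definition vsc_pos :: "'a set \<Rightarrow> ('a \<times> 'a) set \<Rightarrow> 'a position \<Rightarrow> bool" where
  "vsc_pos V E p \<longleftrightarrow> set (fst p) \<subseteq> V \<and> (snd p \<in> sccs E (V - set (fst p)) \<or> snd p = {})"

definition vsc_succ :: "'a set \<Rightarrow> ('a \<times> 'a) set \<Rightarrow> 'a position \<Rightarrow> 'a position \<Rightarrow> bool" where
  "vsc_succ V E p q \<longleftrightarrow>
     (if p = ([], V) \<and> \<not> vsc_pos V E ([], V)
      then fst q = [] \<and> vsc_pos V E q
      else vsc_pos V E q
        \<and> (prefix (fst p) (fst q) \<or> prefix (fst q) (fst p))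
        \<and> card ((set (fst p) - set (fst q)) \<union> (set (fst q) - set (fst p))) = 1
        \<and> (\<forall>v'\<in>snd q. \<exists>v\<in>snd p. same_scc E (V - (set (fst p) \<inter> set (fst q))) v v'))"

text \<open>A search of length N (finite, or infinite if N = \<infinity>) is the sequence s 0, s 1, ...
 restricted to indices i < N.\<close>

definition vsc_search :: "'a set \<Rightarrow> ('a \<times> 'a) set \<Rightarrow> 'a position \<Rightarrow> enat \<Rightarrow> (nat \<Rightarrow> 'a position) \<Rightarrow> bool" where
  "vsc_search V E p0 N s \<longleftrightarrow> 1 \<le> N \<and> s 0 = p0 \<and>
     (\<forall>i. enat (Suc i) < N \<longrightarrow> vsc_succ V E (s i) (s (Suc i)))"

definition search_complete :: "enat \<Rightarrow> (nat \<Rightarrow> 'a position) \<Rightarrow> bool" where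
  "search_complete N s \<longleftrightarrow> N = \<infinity> \<or> (\<exists>n. enat n < N \<and> snd (s n) = {})"

definition search_winning :: "enat \<Rightarrow> (nat \<Rightarrow> 'a position) \<Rightarrow> bool" where
  "search_winning N s \<longleftrightarrow> (\<exists>n. enat n < N \<and> snd (s n) = {})"

definition search_stationary :: "enat \<Rightarrow> (nat \<Rightarrow> 'a position) \<Rightarrow> bool" where
  "search_stationary N s \<longleftrightarrow>
     (\<forall>i. enat (Suc i) < N \<and> snd (s i) \<noteq> {} \<longrightarrow> prefix (fst (s i)) (fst (s (Suc i))))"

definition search_uses_at_most :: "nat \<Rightarrow> enat \<Rightarrow> (nat \<Rightarrow> 'a position) \<Rightarrow> bool" where
  "search_uses_at_most k N s \<longleftrightarrow> (\<forall>i. enat i < N \<longrightarrow> length (fst (s i)) \<le> k)"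

definition consistent_with :: "('a position \<Rightarrow> 'a list) \<Rightarrow> enat \<Rightarrow> (nat \<Rightarrow> 'a position) \<Rightarrow> bool" where
  "consistent_with \<sigma> N s \<longleftrightarrow> (\<forall>i. enat (Suc i) < N \<longrightarrow> fst (s (Suc i)) = \<sigma> (s i))"

definition vsc_strategy :: "'a set \<Rightarrow> ('a \<times> 'a) set \<Rightarrow> ('a position \<Rightarrow> 'a list) \<Rightarrow> bool" where
  "vsc_strategy V E \<sigma> \<longleftrightarrow>
     (\<forall>p. vsc_pos V E p \<or> p = ([], V) \<longrightarrow> (\<exists>R'. vsc_succ V E p (\<sigma> p, R')))"

definition strategy_has :: "'a set \<Rightarrow> ('a \<times> 'a) set \<Rightarrow> ('a position \<Rightarrow> 'a list)
    \<Rightarrow> (enat \<Rightarrow> (nat \<Rightarrow> 'a position) \<Rightarrow> bool) \<Rightarrow> bool" where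
  "strategy_has V E \<sigma> P \<longleftrightarrow>
     (\<forall>N s. vsc_search V E ([], V) N s \<and> search_complete N s \<and> consistent_with \<sigma> N s \<longrightarrow> P N s)"

definition sstat_vsc :: "'a set \<Rightarrow> ('a \<times> 'a) set \<Rightarrow> nat" where
  "sstat_vsc V E = (LEAST k. \<exists>\<sigma>. vsc_strategy V E \<sigma>
       \<and> strategy_has V E \<sigma> search_winning
       \<and> strategy_has V E \<sigma> search_stationary
       \<and> strategy_has V E \<sigma> (search_uses_at_most k))"

end

theory Submission
  imports Defs
begin

text \<open>Against any searcher-stationary strategy the robber keeps to a strongly connected
  component of largest cycle rank. A new cop outside his component changes nothing, and a cop
  inside it lowers the cycle rank of the best remaining component by at most one. So the number
  of cops plus the cycle rank of the robber's component never drops below cr G, and the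
  capturing cop is one more. The minimum defining sstat is attained because placing cops inside
  the robber's component is already a stationary winning strategy.\<close>

lemma reach_mono:
  assumes "H1 \<subseteq> H2" "reach E H1 u v"
  shows "reach E H2 u v"
proof -
  have "E \<inter> H1 \<times> H1 \<subseteq> E \<inter> H2 \<times> H2" using assms(1) by auto
  then show ?thesis
    using assms(2) unfolding reach_def using rtrancl_mono by blast
qed

lemma reach_trans: "reach E H u v \<Longrightarrow> reach E H v w \<Longrightarrow> reach E H u w"
  unfolding reach_def by (rule rtrancl_trans)

lemma same_scc_refl: "u \<in> H \<Longrightarrow> same_scc E H u u"
  unfolding same_scc_def reach_def by simp

lemma same_scc_sym: "same_scc E H u v \<Longrightarrow> same_scc E H v u"
  unfolding same_scc_def by blast

lemma same_scc_trans: "same_scc E H u v \<Longrightarrow> same_scc E H v w \<Longrightarrow> same_scc E H u w"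
  unfolding same_scc_def using reach_trans[of E H] by blast

lemma same_scc_mono: "H1 \<subseteq> H2 \<Longrightarrow> same_scc E H1 u v \<Longrightarrow> same_scc E H2 u v"
  unfolding same_scc_def using reach_mono[of H1 H2 E] by auto

lemma sccs_image: "sccs E H = (\<lambda>u. {v. same_scc E H u v}) ` H"
  unfolding sccs_def by auto

lemma finite_sccs: "finite H \<Longrightarrow> finite (sccs E H)"
  unfolding sccs_image by simp

lemma sccs_nonempty: "H \<noteq> {} \<Longrightarrow> sccs E H \<noteq> {}"
  unfolding sccs_image by simp

lemma sccs_subset: "S \<in> sccs E H \<Longrightarrow> S \<subseteq> H"
  unfolding sccs_def same_scc_def by auto

lemma sccs_not_empty: "S \<in> sccs E H \<Longrightarrow> S \<noteq> {}"
proof -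
  assume "S \<in> sccs E H"
  then obtain u where "u \<in> H" "S = {v. same_scc E H u v}" unfolding sccs_def by blast
  then show ?thesis using same_scc_refl[of u H E] by auto
qed

lemma sccs_eq_class: "S \<in> sccs E H \<Longrightarrow> w \<in> S \<Longrightarrow> S = {x. same_scc E H w x}"
proof -
  assume "S \<in> sccs E H" "w \<in> S"
  then obtain u where u: "S = {v. same_scc E H u v}" "same_scc E H u w"
    unfolding sccs_def by blast
  then show ?thesis
    using same_scc_sym[OF u(2)] same_scc_trans[of E H u w] same_scc_trans[of E H w u] by blast
qed

lemma reach_within_scc:
  assumes "reach E H u y" "reach E H y u" "u \<in> H"
  shows "reach E {x. same_scc E H u x} u y"
  using assms(1,2) unfolding reach_def
proof (induction rule: rtrancl_induct)
  case base
  then show ?case by simp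
next
  case (step y z)
  let ?S = "{x. same_scc E H u x}"
  have yz: "(y, z) \<in> E" "y \<in> H" "z \<in> H" using step.hyps(2) by auto
  have "(y, u) \<in> (E \<inter> H \<times> H)\<^sup>*"
    using step.hyps(2) step.prems by (rule converse_rtrancl_into_rtrancl)
  then have "(u, y) \<in> (E \<inter> ?S \<times> ?S)\<^sup>*" and "y \<in> ?S"
    using step.IH step.hyps(1) yz assms(3) unfolding same_scc_def reach_def by auto
  moreover have "z \<in> ?S"
    using rtrancl_into_rtrancl[OF step.hyps] step.prems yz assms(3)
    unfolding same_scc_def reach_def by simp
  ultimately show ?case
    using yz by (simp add: rtrancl.rtrancl_into_rtrancl)
qed

lemma scc_strongly_connected: "S \<in> sccs E H \<Longrightarrow> strongly_connected E S"
  unfolding strongly_connected_def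
proof (intro conjI ballI)
  assume S: "S \<in> sccs E H"
  then show "S \<noteq> {}" by (rule sccs_not_empty)
  fix x y assume "x \<in> S" "y \<in> S"
  then have "S = {z. same_scc E H x z}" "same_scc E H x y"
    using sccs_eq_class[OF S] by auto
  then show "reach E S x y"
    using reach_within_scc unfolding same_scc_def by metis
qed

lemma strongly_connected_in_sccs: "strongly_connected E H \<Longrightarrow> H \<in> sccs E H"
  unfolding strongly_connected_def sccs_def same_scc_def by blast

lemma sccs_restrict:
  assumes R: "R \<in> sccs E H" and "H' \<subseteq> H" and T: "T \<in> sccs E (R \<inter> H')"
  shows "T \<in> sccs E H'"
proof -
  obtain u where u: "u \<in> R \<inter> H'" "T = {w. same_scc E (R \<inter> H') u w}"
    using T unfolding sccs_def by blast
  have "same_scc E (R \<inter> H') u w" if uw: "same_scc E H' u w" for w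
  proof -
    let ?S = "{x. same_scc E H' u x}"
    have "?S \<subseteq> R \<inter> H'"
    proof
      fix x assume "x \<in> ?S"
      then have "same_scc E H u x" "x \<in> H'"
        using same_scc_mono[OF \<open>H' \<subseteq> H\<close>] unfolding same_scc_def by auto
      then show "x \<in> R \<inter> H'" using sccs_eq_class[OF R, of u] u(1) by auto
    qed
    moreover have "?S = {x. same_scc E H' w x}"
      using same_scc_trans[OF same_scc_sym[OF uw]] same_scc_trans[OF uw] by auto
    then have "reach E ?S u w" "reach E ?S w u"
      using reach_within_scc[of E H' u w] reach_within_scc[of E H' w u] uw
      unfolding same_scc_def by auto
    ultimately have "reach E (R \<inter> H') u w" "reach E (R \<inter> H') w u"
      using reach_mono[of ?S "R \<inter> H'" E] by simp_all
    moreover have "w \<in> R \<inter> H'"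
      using \<open>?S \<subseteq> R \<inter> H'\<close> uw by blast
    ultimately show ?thesis
      using u(1) unfolding same_scc_def by blast
  qed
  moreover have "same_scc E H' u w" if "same_scc E (R \<inter> H') u w" for w
    using same_scc_mono[OF _ that] by blast
  ultimately have "T = {w. same_scc E H' u w}"
    using u(2) by blast
  then show ?thesis
    using u unfolding sccs_def by blast
qed

lemma acyclic_sub_mono: "S \<subseteq> H \<Longrightarrow> acyclic_sub E H \<Longrightarrow> acyclic_sub E S"
proof -
  assume "S \<subseteq> H" "acyclic_sub E H"
  moreover have "E \<inter> S \<times> S \<subseteq> E \<inter> H \<times> H" using \<open>S \<subseteq> H\<close> by auto
  ultimately show "acyclic_sub E S"
    unfolding acyclic_sub_def using trancl_mono by blast
qed

lemma cr_acyclic: "acyclic_sub E H \<Longrightarrow> cr E H = 0"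
  by (subst cr.simps) simp

lemma cr_singleton: "(v, v) \<notin> E \<Longrightarrow> cr E {v} = 0"
proof -
  assume "(v, v) \<notin> E"
  then have "E \<inter> {v} \<times> {v} = {}" by auto
  then show ?thesis
    unfolding acyclic_sub_def by (intro cr_acyclic) (simp add: acyclic_sub_def)
qed

lemma cr_le_Suc_cr_Diff:
  assumes "finite R" "strongly_connected E R" "v \<in> R"
  shows "cr E R \<le> 1 + cr E (R - {v})"
proof (cases "acyclic_sub E R")
  case True
  then show ?thesis by (simp add: cr_acyclic)
next
  case False
  have "Min ((\<lambda>v. cr E (R - {v})) ` R) \<le> cr E (R - {v})"
    using assms by (intro Min_le) auto
  then show ?thesis
    using assms False by (subst cr.simps) simp
qed

lemma ex_scc_cr_eq:
  assumes "finite H" "H \<noteq> {}"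
  shows "\<exists>S\<in>sccs E H. cr E S = cr E H"
proof (cases "acyclic_sub E H")
  case True
  obtain S where S: "S \<in> sccs E H" using sccs_nonempty[OF assms(2)] by blast
  then have "acyclic_sub E S" using acyclic_sub_mono[OF sccs_subset True] by blast
  then show ?thesis using S cr_acyclic[of E S] cr_acyclic[OF True] by auto
next
  case False
  show ?thesis
  proof (cases "strongly_connected E H")
    case True
    then show ?thesis using strongly_connected_in_sccs by blast
  next
    case not_sc: False
    have "cr E H = Max ((\<lambda>S. cr E S) ` sccs E H)"
      using assms(1) False not_sc by (subst cr.simps) simp
    moreover have "Max ((\<lambda>S. cr E S) ` sccs E H) \<in> (\<lambda>S. cr E S) ` sccs E H"
      using finite_sccs[OF assms(1)] sccs_nonempty[OF assms(2)] by (intro Max_in) auto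
    ultimately show ?thesis by force
  qed
qed

lemma sccs_Diff_not_mem:
  assumes R: "R \<in> sccs E H" and "v \<notin> R"
  shows "R \<in> sccs E (H - {v})"
proof -
  have "R \<inter> (H - {v}) = R" using sccs_subset[OF R] \<open>v \<notin> R\<close> by auto
  moreover have "R \<in> sccs E R"
    using R by (intro strongly_connected_in_sccs scc_strongly_connected)
  ultimately show ?thesis
    using sccs_restrict[OF R, of "H - {v}"] by simp
qed

lemma sccs_Diff_mem:
  assumes "finite H" and R: "R \<in> sccs E H" and "v \<in> R" "R \<noteq> {v}"
  shows "\<exists>S\<in>sccs E (H - {v}). S \<subseteq> R \<and> cr E R \<le> 1 + cr E S"
proof -
  have fin: "finite R" using sccs_subset[OF R] \<open>finite H\<close> finite_subset by blast
  have "R - {v} \<noteq> {}" using \<open>v \<in> R\<close> \<open>R \<noteq> {v}\<close> by blast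
  then obtain S where S: "S \<in> sccs E (R - {v})" "cr E S = cr E (R - {v})"
    using ex_scc_cr_eq[of "R - {v}"] fin by blast
  have "R \<inter> (H - {v}) = R - {v}" using sccs_subset[OF R] by blast
  then have "S \<in> sccs E (H - {v})" using sccs_restrict[OF R, of "H - {v}"] S(1) by auto
  moreover have "S \<subseteq> R" using sccs_subset[OF S(1)] by blast
  moreover have "cr E R \<le> 1 + cr E S"
    using cr_le_Suc_cr_Diff[OF fin scc_strongly_connected[OF R] \<open>v \<in> R\<close>] S(2) by simp
  ultimately show ?thesis by blast
qed

lemma vsc_succ_iff:
  assumes "vsc_pos V E p"
  shows "vsc_succ V E p q \<longleftrightarrow> vsc_pos V E q
        \<and> (prefix (fst p) (fst q) \<or> prefix (fst q) (fst p))
        \<and> card ((set (fst p) - set (fst q)) \<union> (set (fst q) - set (fst p))) = 1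
        \<and> (\<forall>v'\<in>snd q. \<exists>v\<in>snd p. same_scc E (V - (set (fst p) \<inter> set (fst q))) v v')"
proof -
  have "\<not> (p = ([], V) \<and> \<not> vsc_pos V E ([], V))" using assms by auto
  then show ?thesis unfolding vsc_succ_def by (simp only: if_False)
qed

lemma vsc_succ_vsc_pos: "vsc_succ V E p q \<Longrightarrow> vsc_pos V E q"
  unfolding vsc_succ_def by (auto split: if_splits)

lemma vsc_pos_subset: "vsc_pos V E (X, R) \<Longrightarrow> set X \<subseteq> V \<and> R \<subseteq> V - set X"
  unfolding vsc_pos_def using sccs_subset[of R E "V - set X"] by auto

lemma prefix_card_diff_eq_1:
  assumes "prefix X X'" "card ((set X - set X') \<union> (set X' - set X)) = 1"
  obtains v where "set X' = insert v (set X)" "v \<notin> set X"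
proof -
  have "set X \<subseteq> set X'" using assms(1) by (rule set_mono_prefix)
  then have "(set X - set X') \<union> (set X' - set X) = set X' - set X" by auto
  then have "card (set X' - set X) = 1" using assms(2) by simp
  then obtain v where "set X' - set X = {v}" by (rule card_1_singletonE)
  then show ?thesis using that \<open>set X \<subseteq> set X'\<close> by blast
qed

lemma vsc_succ_place_cop:
  assumes p: "vsc_pos V E (X, R)" and "vsc_pos V E (X', R')" "prefix X X'"
    and X': "set X' = insert v (set X)" "v \<notin> set X" and "R' \<subseteq> R"
  shows "vsc_succ V E (X, R) (X', R')"
proof -
  have sd: "(set X - set X') \<union> (set X' - set X) = {v}" using X' by auto
  have int: "set X \<inter> set X' = set X" using X' by auto
  have "\<forall>w\<in>R'. \<exists>u\<in>R. same_scc E (V - set X) u w"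
  proof
    fix w assume "w \<in> R'"
    then have "w \<in> R" "w \<in> V - set X" using \<open>R' \<subseteq> R\<close> vsc_pos_subset[OF p] by auto
    then show "\<exists>u\<in>R. same_scc E (V - set X) u w" using same_scc_refl[of w "V - set X" E] by blast
  qed
  then show ?thesis
    unfolding vsc_succ_iff[OF p] fst_conv snd_conv sd int using assms(2,3) by simp
qed

lemma vsc_succ_remove_cop:
  assumes p: "vsc_pos V E (X, R)" and "prefix X' X" "card (set X - set X') = 1"
  shows "vsc_succ V E (X, R) (X', {})"
proof -
  have "set X' \<subseteq> set X" using \<open>prefix X' X\<close> by (rule set_mono_prefix)
  then have "(set X - set X') \<union> (set X' - set X) = set X - set X'" by auto
  moreover have "vsc_pos V E (X', {})"
    using vsc_pos_subset[OF p] \<open>set X' \<subseteq> set X\<close> unfolding vsc_pos_def by auto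
  ultimately show ?thesis
    unfolding vsc_succ_iff[OF p] using assms(2,3) by simp
qed

text \<open>The robber's potential: the cops already placed plus, while the robber is free, one more
  than the cycle rank of his component. Against stationary moves the robber can keep it from
  decreasing, and at capture it is the number of cops on the board.\<close>

definition robber_potential :: "('a \<times> 'a) set \<Rightarrow> 'a position \<Rightarrow> nat" where
  "robber_potential E p = card (set (fst p)) + (if snd p = {} then 0 else 1 + cr E (snd p))"

lemma robber_answer_to_new_cop:
  assumes G: "digraph V E" and p: "vsc_pos V E (X, R)" "R \<noteq> {}"
    and "set X' \<subseteq> V" "prefix X X'" "card ((set X - set X') \<union> (set X' - set X)) = 1"
  shows "\<exists>R'. vsc_succ V E (X, R) (X', R')
           \<and> robber_potential E (X, R) \<le> robber_potential E (X', R')"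
proof -
  obtain v where v: "set X' = insert v (set X)" "v \<notin> set X"
    using assms(5,6) by (rule prefix_card_diff_eq_1)
  have R: "R \<in> sccs E (V - set X)" using p unfolding vsc_pos_def by simp
  have H': "V - set X' = (V - set X) - {v}" using v by auto
  have card_X': "card (set X') = Suc (card (set X))" using v by simp
  have move: "vsc_succ V E (X, R) (X', R')"
    if "R' \<subseteq> R" "R' \<in> sccs E (V - set X') \<or> R' = {}" for R'
  proof -
    have "vsc_pos V E (X', R')" using that(2) \<open>set X' \<subseteq> V\<close> unfolding vsc_pos_def by auto
    then show ?thesis using vsc_succ_place_cop[OF p(1) _ \<open>prefix X X'\<close> v that(1)] by simp
  qed
  consider "v \<notin> R" | "R = {v}" | "v \<in> R" "R \<noteq> {v}" by blast
  then show ?thesis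
  proof cases
    case 1
    then have "R \<in> sccs E (V - set X')" using sccs_Diff_not_mem[OF R] H' by simp
    then have "vsc_succ V E (X, R) (X', R)" using move by blast
    moreover have "robber_potential E (X, R) \<le> robber_potential E (X', R)"
      using card_X' p(2) unfolding robber_potential_def by simp
    ultimately show ?thesis by blast
  next
    case 2
    have "(v, v) \<notin> E" using G unfolding digraph_def by blast
    then have "cr E R = 0" using 2 cr_singleton by simp
    then have "robber_potential E (X, R) \<le> robber_potential E (X', {})"
      using card_X' p(2) unfolding robber_potential_def by simp
    then show ?thesis using move[of "{}"] by blast
  next
    case 3
    have "finite (V - set X)" using G unfolding digraph_def by simp
    then obtain S where S: "S \<in> sccs E (V - set X')" "S \<subseteq> R" "cr E R \<le> 1 + cr E S"
      using sccs_Diff_mem[OF _ R 3] H' by auto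
    then have "robber_potential E (X, R) \<le> robber_potential E (X', S)"
      using card_X' sccs_not_empty[OF S(1)] p(2) unfolding robber_potential_def by simp
    then show ?thesis using move[of S] S by blast
  qed
qed

lemma robber_response:
  assumes G: "digraph V E" and p: "vsc_pos V E p \<or> p = ([], V)" and q: "vsc_succ V E p (X', R0)"
  shows "\<exists>R'. vsc_succ V E p (X', R')
           \<and> (snd p \<noteq> {} \<and> prefix (fst p) X' \<longrightarrow>
              robber_potential E p \<le> robber_potential E (X', R'))"
proof (cases "vsc_pos V E p")
  case False
  with p have p0: "p = ([], V)" by blast
  with False q have X': "X' = []" unfolding vsc_succ_def by simp
  have "finite V" "V \<noteq> {}" using G unfolding digraph_def by auto
  then obtain S where S: "S \<in> sccs E V" "cr E S = cr E V" using ex_scc_cr_eq by blast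
  have "vsc_succ V E p (X', S)"
    using p0 False X' S(1) unfolding vsc_succ_def vsc_pos_def by simp
  moreover have "robber_potential E p = robber_potential E (X', S)"
    using p0 X' S \<open>V \<noteq> {}\<close> sccs_not_empty[OF S(1)] unfolding robber_potential_def by simp
  ultimately show ?thesis by (metis order_refl)
next
  case pos: True
  show ?thesis
  proof (cases "snd p \<noteq> {} \<and> prefix (fst p) X'")
    case False
    then show ?thesis using q by blast
  next
    case True
    obtain X R where p_def: "p = (X, R)" by (cases p)
    have "set X' \<subseteq> V" using vsc_succ_vsc_pos[OF q] unfolding vsc_pos_def by simp
    moreover have "card ((set X - set X') \<union> (set X' - set X)) = 1"
      using q p_def unfolding vsc_succ_iff[OF pos] by simp
    ultimately show ?thesis
      using robber_answer_to_new_cop[OF G _ _ _ _] pos True p_def by simp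
  qed
qed

lemma robber_counterplay:
  assumes G: "digraph V E" and \<sigma>: "vsc_strategy V E \<sigma>"
  shows "\<exists>s. s 0 = ([], V) \<and> (\<forall>i. vsc_succ V E (s i) (s (Suc i)) \<and> fst (s (Suc i)) = \<sigma> (s i)
    \<and> (snd (s i) \<noteq> {} \<and> prefix (fst (s i)) (fst (s (Suc i))) \<longrightarrow>
       robber_potential E (s i) \<le> robber_potential E (s (Suc i))))"
proof -
  let ?P = "\<lambda>(n::nat) p. (vsc_pos V E p \<or> p = ([], V)) \<and> (n = 0 \<longrightarrow> p = ([], V))"
  let ?Q = "\<lambda>(_::nat) p q. vsc_succ V E p q \<and> fst q = \<sigma> p
    \<and> (snd p \<noteq> {} \<and> prefix (fst p) (fst q) \<longrightarrow> robber_potential E p \<le> robber_potential E q)"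
  have "\<exists>s. \<forall>n. ?P n (s n) \<and> ?Q n (s n) (s (Suc n))"
  proof (rule dependent_nat_choice)
    show "\<exists>p. ?P 0 p" by blast
  next
    fix p n assume P: "?P n p"
    then obtain R0 where "vsc_succ V E p (\<sigma> p, R0)"
      using \<sigma> unfolding vsc_strategy_def by blast
    then obtain R' where "?Q n p (\<sigma> p, R')"
      using robber_response[OF G] P by fastforce
    then show "\<exists>q. ?P (Suc n) q \<and> ?Q n p q"
      using vsc_succ_vsc_pos by blast
  qed
  then show ?thesis by blast
qed

lemma stationary_winning_strategy_bound:
  assumes G: "digraph V E" and \<sigma>: "vsc_strategy V E \<sigma>"
    and win: "strategy_has V E \<sigma> search_winning"
    and stat: "strategy_has V E \<sigma> search_stationary"
    and uses: "strategy_has V E \<sigma> (search_uses_at_most k)"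
  shows "1 + cr E V \<le> k"
proof -
  obtain s where s0: "s 0 = ([], V)" and play: "\<And>i. vsc_succ V E (s i) (s (Suc i))"
    "\<And>i. fst (s (Suc i)) = \<sigma> (s i)"
    "\<And>i. snd (s i) \<noteq> {} \<and> prefix (fst (s i)) (fst (s (Suc i))) \<Longrightarrow>
       robber_potential E (s i) \<le> robber_potential E (s (Suc i))"
    using robber_counterplay[OF G \<sigma>] by blast
  have search: "vsc_search V E ([], V) \<infinity> s \<and> search_complete \<infinity> s \<and> consistent_with \<sigma> \<infinity> s"
    unfolding vsc_search_def search_complete_def consistent_with_def using s0 play(1,2) by simp
  then have "\<exists>n. snd (s n) = {}"
    using win unfolding strategy_has_def search_winning_def by blast
  then obtain n where n: "snd (s n) = {}" "\<And>i. i < n \<Longrightarrow> snd (s i) \<noteq> {}"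
    unfolding exists_least_iff[of "\<lambda>n. snd (s n) = {}"] by blast
  have "prefix (fst (s i)) (fst (s (Suc i)))" if "i < n" for i
    using stat search n(2)[OF that] unfolding strategy_has_def search_stationary_def by simp
  then have mono: "robber_potential E (s 0) \<le> robber_potential E (s i)" if "i \<le> n" for i
    using that
  proof (induction i)
    case (Suc i)
    then show ?case using play(3)[of i] n(2)[of i] by simp
  qed simp
  have "V \<noteq> {}" using G unfolding digraph_def by simp
  then have "1 + cr E V = robber_potential E (s 0)"
    using s0 unfolding robber_potential_def by simp
  also have "\<dots> \<le> robber_potential E (s n)" using mono by simp
  also have "\<dots> = card (set (fst (s n)))" using n(1) unfolding robber_potential_def by simp
  also have "\<dots> \<le> length (fst (s n))" by (rule card_length)
  also have "\<dots> \<le> k"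
    using uses search unfolding strategy_has_def search_uses_at_most_def by simp
  finally show ?thesis .
qed

lemma finite_psubset_chain_reaches_empty:
  assumes "finite (A 0)" and shrink: "\<And>i. A i \<noteq> {} \<Longrightarrow> A (Suc i) \<subset> A i"
  shows "\<exists>n. A n = {}"
proof (rule ccontr)
  assume "\<nexists>n. A n = {}"
  then have ne: "A i \<noteq> {}" for i by blast
  have "A i \<subseteq> A 0 \<and> card (A i) + i \<le> card (A 0)" for i
  proof (induction i)
    case (Suc i)
    then have "finite (A i)" using \<open>finite (A 0)\<close> finite_subset by blast
    then have "card (A (Suc i)) < card (A i)" using shrink[OF ne] psubset_card_mono by blast
    then show ?case using Suc shrink[OF ne, of i] by auto
  qed simp
  from this[of "Suc (card (A 0))"] show False by simp
qed

lemma vsc_search_pos: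
  assumes "vsc_search V E p0 N s" "enat i < N"
  shows "vsc_pos V E (s i) \<or> s i = p0"
proof (cases i)
  case 0
  then show ?thesis using assms(1) unfolding vsc_search_def by simp
next
  case (Suc j)
  then show ?thesis using assms vsc_succ_vsc_pos unfolding vsc_search_def by blast
qed

lemma exists_prefix_one_letter_fewer:
  "X \<noteq> [] \<Longrightarrow> \<exists>Y. prefix Y X \<and> card (set X - set Y) = 1"
proof (induction X rule: rev_induct)
  case (snoc a X)
  show ?case
  proof (cases "a \<in> set X \<and> X \<noteq> []")
    case True
    then obtain Y where "prefix Y X" "card (set X - set Y) = 1" using snoc.IH by blast
    moreover have "set (X @ [a]) = set X" using True by auto
    ultimately show ?thesis by (intro exI[of _ Y]) (simp add: prefix_snoc)
  next
    case False
    then have "set (X @ [a]) - set X = {a}" by auto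
    then show ?thesis by (intro exI[of _ X]) simp
  qed
qed simp

text \<open>After the capture the
  game still demands moves, so the cops alternately leave and re-enter the board. The first
  branch only matters at the special initial position.\<close>

definition greedy_strategy :: "'a set \<Rightarrow> ('a \<times> 'a) set \<Rightarrow> 'a position \<Rightarrow> 'a list" where
  "greedy_strategy V E p =
     (if \<not> vsc_pos V E p then []
      else if snd p \<noteq> {} then fst p @ [SOME v. v \<in> snd p]
      else if fst p = [] then [SOME v. v \<in> V]
      else SOME Y. prefix Y (fst p) \<and> card (set (fst p) - set Y) = 1)"

lemma greedy_strategy_place_cop:
  assumes "vsc_pos V E p" "snd p \<noteq> {}"
  obtains v where "greedy_strategy V E p = fst p @ [v]" "v \<in> snd p"
  using assms some_in_eq unfolding greedy_strategy_def by auto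

lemma greedy_strategy_succ:
  assumes G: "digraph V E" and p: "vsc_pos V E p \<or> p = ([], V)"
  shows "vsc_succ V E p (greedy_strategy V E p, {})"
proof -
  obtain X R where p_def: "p = (X, R)" by (cases p)
  have append: "vsc_succ V E (X, R) (X @ [v], {})"
    if pos: "vsc_pos V E (X, R)" and "v \<in> V - set X" for v
  proof (rule vsc_succ_place_cop[OF pos])
    show "vsc_pos V E (X @ [v], {})" using vsc_pos_subset[OF pos] that unfolding vsc_pos_def by simp
  qed (use that in auto)
  consider "\<not> vsc_pos V E p" | "vsc_pos V E p" "R \<noteq> {}" | "vsc_pos V E p" "R = {}" "X = []"
    | "vsc_pos V E p" "R = {}" "X \<noteq> []" by blast
  then show ?thesis
  proof cases
    case 1
    then show ?thesis
      using p unfolding vsc_succ_def greedy_strategy_def vsc_pos_def by auto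
  next
    case 2
    then obtain v where "greedy_strategy V E p = X @ [v]" "v \<in> R"
      using greedy_strategy_place_cop[of V E p] p_def by auto
    moreover have "R \<subseteq> V - set X" using 2 vsc_pos_subset[of V E X R] p_def by simp
    ultimately show ?thesis using append 2 p_def by auto
  next
    case 3
    have "V \<noteq> {}" using G unfolding digraph_def by simp
    then have "(SOME v. v \<in> V) \<in> V" by (simp add: some_in_eq)
    then show ?thesis using append[of "SOME v. v \<in> V"] 3 p_def
      unfolding greedy_strategy_def by simp
  next
    case 4
    let ?Y = "SOME Y. prefix Y X \<and> card (set X - set Y) = 1"
    have "prefix ?Y X \<and> card (set X - set ?Y) = 1"
      using exists_prefix_one_letter_fewer[OF 4(3)] by (rule someI_ex)
    then have "vsc_succ V E p (?Y, {})"
      using vsc_succ_remove_cop[of V E X R] 4 p_def by blast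
    then show ?thesis using 4 p_def unfolding greedy_strategy_def by simp
  qed
qed

lemma greedy_strategy_distinct:
  assumes "distinct (fst p)"
  shows "distinct (greedy_strategy V E p)"
proof -
  consider "\<not> vsc_pos V E p" | "vsc_pos V E p" "snd p \<noteq> {}" | "snd p = {}" "fst p = []"
    | "vsc_pos V E p" "snd p = {}" "fst p \<noteq> []" by blast
  then show ?thesis
  proof cases
    case 2
    then obtain v where v: "greedy_strategy V E p = fst p @ [v]" "v \<in> snd p"
      by (rule greedy_strategy_place_cop)
    then have "v \<notin> set (fst p)"
      using vsc_pos_subset[of V E "fst p" "snd p"] 2 by auto
    then show ?thesis using v assms by simp
  next
    case 4
    let ?Y = "SOME Y. prefix Y (fst p) \<and> card (set (fst p) - set Y) = 1"
    have "prefix ?Y (fst p)"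
      using someI_ex[OF exists_prefix_one_letter_fewer[OF 4(3)]] by blast
    then obtain zs where "fst p = ?Y @ zs" by (auto simp: prefix_def)
    then have "distinct ?Y" using assms by (metis distinct_append)
    then show ?thesis using 4 unfolding greedy_strategy_def by simp
  qed (auto simp: greedy_strategy_def)
qed

lemma greedy_strategy_prefix:
  assumes "vsc_pos V E p \<or> p = ([], V)" "snd p \<noteq> {}"
  shows "prefix (fst p) (greedy_strategy V E p)"
  using assms unfolding greedy_strategy_def by auto

lemma greedy_strategy_shrinks:
  assumes G: "digraph V E" and p: "vsc_pos V E p \<or> p = ([], V)" "snd p \<noteq> {}"
    and q: "vsc_succ V E p q" "fst q = greedy_strategy V E p"
  shows "snd q \<subset> snd p"
proof (cases "vsc_pos V E p")
  case False
  with p have p0: "p = ([], V)" by blast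
  have "snd q \<in> sccs E V \<or> snd q = {}" "V \<notin> sccs E V"
    using q p0 False unfolding vsc_succ_def vsc_pos_def by auto
  then show ?thesis using p0 p(2) sccs_subset by fastforce
next
  case True
  obtain X R where p_def: "p = (X, R)" by (cases p)
  obtain v where v: "fst q = X @ [v]" "v \<in> R"
    using greedy_strategy_place_cop[OF True p(2)] q(2) p_def by auto
  have R: "R \<in> sccs E (V - set X)" using True p(2) p_def unfolding vsc_pos_def by simp
  have "set (fst p) \<inter> set (fst q) = set X" using v(1) p_def by auto
  then have "\<forall>w\<in>snd q. \<exists>u\<in>R. same_scc E (V - set X) u w"
    using q(1) p_def unfolding vsc_succ_iff[OF True] by simp
  then have "snd q \<subseteq> R"
    using sccs_eq_class[OF R] by blast
  moreover have "vsc_pos V E (fst q, snd q)" using vsc_succ_vsc_pos[OF q(1)] by simp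
  then have "v \<notin> snd q" using vsc_pos_subset v(1) by fastforce
  ultimately show ?thesis using v(2) p_def by auto
qed

lemma greedy_search_distinct:
  assumes search: "vsc_search V E ([], V) N s"
    and cons: "consistent_with (greedy_strategy V E) N s" and "enat i < N"
  shows "distinct (fst (s i))"
  using \<open>enat i < N\<close>
proof (induction i)
  case 0
  then show ?case using search unfolding vsc_search_def by simp
next
  case (Suc i)
  then have "enat i < N" by (meson Suc_ile_eq less_imp_le)
  then show ?case
    using Suc cons greedy_strategy_distinct unfolding consistent_with_def by metis
qed

lemma greedy_search_stationary:
  assumes "vsc_search V E ([], V) N s" "consistent_with (greedy_strategy V E) N s"
  shows "search_stationary N s"
  unfolding search_stationary_def
proof (intro allI impI)
  fix i assume i: "enat (Suc i) < N \<and> snd (s i) \<noteq> {}"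
  then have "enat i < N" by (meson Suc_ile_eq less_imp_le)
  then have "prefix (fst (s i)) (greedy_strategy V E (s i))"
    using greedy_strategy_prefix vsc_search_pos[OF assms(1)] i by blast
  then show "prefix (fst (s i)) (fst (s (Suc i)))"
    using assms(2) i unfolding consistent_with_def by simp
qed

lemma greedy_search_uses_at_most:
  assumes "finite V" "vsc_search V E ([], V) N s" "consistent_with (greedy_strategy V E) N s"
  shows "search_uses_at_most (card V) N s"
  unfolding search_uses_at_most_def
proof (intro allI impI)
  fix i assume "enat i < N"
  then have "vsc_pos V E (s i) \<or> s i = ([], V)" by (rule vsc_search_pos[OF assms(2)])
  then have "set (fst (s i)) \<subseteq> V"
    using vsc_pos_subset[of V E "fst (s i)" "snd (s i)"] by (cases "s i") auto
  moreover have "distinct (fst (s i))"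
    using greedy_search_distinct[OF assms(2,3) \<open>enat i < N\<close>] .
  ultimately show "length (fst (s i)) \<le> card V"
    using card_mono[OF \<open>finite V\<close>] distinct_card by metis
qed

lemma greedy_search_winning:
  assumes G: "digraph V E" and search: "vsc_search V E ([], V) N s"
    and "consistent_with (greedy_strategy V E) N s" "search_complete N s"
  shows "search_winning N s"
proof (cases "N = \<infinity>")
  case False
  then show ?thesis using assms(4) unfolding search_complete_def search_winning_def by blast
next
  case True
  have "snd (s (Suc i)) \<subset> snd (s i)" if "snd (s i) \<noteq> {}" for i
    using greedy_strategy_shrinks[OF G vsc_search_pos[OF search] that] search assms(3) True
    unfolding vsc_search_def consistent_with_def by simp
  moreover have "finite (snd (s 0))"
    using search G unfolding vsc_search_def digraph_def by simp
  ultimately obtain n where "snd (s n) = {}"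
    using finite_psubset_chain_reaches_empty[of "\<lambda>i. snd (s i)"] by blast
  then show ?thesis using True unfolding search_winning_def by auto
qed

lemma greedy_strategy_wins:
  assumes G: "digraph V E"
  shows "vsc_strategy V E (greedy_strategy V E)
    \<and> strategy_has V E (greedy_strategy V E) search_winning
    \<and> strategy_has V E (greedy_strategy V E) search_stationary
    \<and> strategy_has V E (greedy_strategy V E) (search_uses_at_most (card V))"
proof -
  have "finite V" using G unfolding digraph_def by simp
  show ?thesis
    unfolding vsc_strategy_def strategy_has_def
  proof (intro conjI allI impI; (elim conjE)?)
    fix p :: "'a position" assume "vsc_pos V E p \<or> p = ([], V)"
    then show "\<exists>R'. vsc_succ V E p (greedy_strategy V E p, R')"
      using greedy_strategy_succ[OF G] by blast
  next
    fix N s assume "vsc_search V E ([], V) N s" "search_complete N s"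
      "consistent_with (greedy_strategy V E) N s"
    then show "search_winning N s" "search_stationary N s"
      "search_uses_at_most (card V) N s"
      using greedy_search_winning[OF G] greedy_search_stationary
        greedy_search_uses_at_most[OF \<open>finite V\<close>] by blast+
  qed
qed

theorem lemma2:
  fixes V :: "'a set" and E :: "('a \<times> 'a) set"
  assumes "digraph V E"
  shows "1 + cr E V \<le> sstat_vsc V E"
proof -
  let ?P = "\<lambda>k. \<exists>\<sigma>. vsc_strategy V E \<sigma>
       \<and> strategy_has V E \<sigma> search_winning
       \<and> strategy_has V E \<sigma> search_stationary
       \<and> strategy_has V E \<sigma> (search_uses_at_most k)"
  have "?P (card V)" using greedy_strategy_wins[OF assms] by blast
  then have "?P (Least ?P)" by (rule LeastI)
  then have "1 + cr E V \<le> Least ?P"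
    using stationary_winning_strategy_bound[OF assms] by blast
  then show ?thesis unfolding sstat_vsc_def .
qed

end
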